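(* Let $R$ be an associative ring and let $S=\begin{pmatrix}A&B\\ C&D\end{pmatrix}$ be a non-commuting switch over $R$. Let $Q=(1-A)(1-D)$ and let $S'=\begin{pmatrix}0&1\\ Q&1-Q\end{pmatrix}$. For $n\geq 2$ let $M$ be the $n\times n$ matrix over $R$ with $M_{11}=1$, $M_{1c}=0$ for $c>1$, and for $r\geq 2$: $M_{rc}=B^{c-1}A$ for $1\le c<r$, $M_{rr}=B^{r-1}$, $M_{rc}=0$ for $c>r$ (so each row after the first starts with $A$ followed by $B$ times the previous row). Then $M$ is invertible and $\rho(S,n)=M^{-1}\rho(S',n)M$, i.e. for each $i=1,\dots,n-1$, $$I_{i-1}\oplus S\oplus I_{n-i-1}=M^{-1}\,(I_{i-1}\oplus S'\oplus I_{n-i-1})\,M.$$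
   Context: A non-commuting switch over $R$ is $S=\begin{pmatrix}A&B\\ C&D\end{pmatrix}$ where $A$, $A-1$, $B$ are invertible elements of $R$ that do not commute and satisfy the fundamental equation $A^{-1}B^{-1}AB-BA^{-1}B^{-1}A=B^{-1}AB-A$, and $C=A^{-1}B^{-1}A(1-A)$, $D=1-A^{-1}B^{-1}AB$. For a $2\times 2$ matrix $S$ over $R$, $\rho(S,n)$ is the assignment sending the standard braid generator $\sigma_i$ ($1\le i\le n-1$) to the $n\times n$ block-diagonal matrix $I_{i-1}\oplus S\oplus I_{n-i-1}$. *)

theory Defs
  imports Main
begin

text \<open>Square matrices over a (not necessarily commutative) ring are represented as
functions nat => nat => 'a, with rows/columns indexed by 1..n; entries outside
this range are irrelevant.\<close>

definition invertible_elem :: "'a::ring_1 \<Rightarrow> bool" where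
  "invertible_elem x \<longleftrightarrow> (\<exists>y. x * y = 1 \<and> y * x = 1)"

definition mat_mult :: "nat \<Rightarrow> (nat \<Rightarrow> nat \<Rightarrow> 'a::ring_1) \<Rightarrow> (nat \<Rightarrow> nat \<Rightarrow> 'a) \<Rightarrow> nat \<Rightarrow> nat \<Rightarrow> 'a" where
  "mat_mult n X Y r c = (\<Sum>k = 1..n. X r k * Y k c)"

definition mat_id :: "nat \<Rightarrow> nat \<Rightarrow> 'a::ring_1" where
  "mat_id r c = (if r = c then 1 else 0)"

definition mat_eq :: "nat \<Rightarrow> (nat \<Rightarrow> nat \<Rightarrow> 'a) \<Rightarrow> (nat \<Rightarrow> nat \<Rightarrow> 'a) \<Rightarrow> bool" where
  "mat_eq n X Y \<longleftrightarrow> (\<forall>r c. 1 \<le> r \<and> r \<le> n \<and> 1 \<le> c \<and> c \<le> n \<longrightarrow> X r c = Y r c)"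

definition mat2 :: "'a \<Rightarrow> 'a \<Rightarrow> 'a \<Rightarrow> 'a \<Rightarrow> nat \<Rightarrow> nat \<Rightarrow> 'a::ring_1" where
  "mat2 a b c d r s = (if r = 1 \<and> s = 1 then a else if r = 1 \<and> s = 2 then b
                       else if r = 2 \<and> s = 1 then c else if r = 2 \<and> s = 2 then d else 0)"

definition rho :: "(nat \<Rightarrow> nat \<Rightarrow> 'a::ring_1) \<Rightarrow> nat \<Rightarrow> nat \<Rightarrow> nat \<Rightarrow> nat \<Rightarrow> 'a" where
  "rho S n i r c = (if (r = i \<or> r = i + 1) \<and> (c = i \<or> c = i + 1)
                    then S (r + 1 - i) (c + 1 - i) else mat_id r c)"

definition inverse_elem :: "'a::ring_1 \<Rightarrow> 'a" where
  "inverse_elem x = (THE y. x * y = 1 \<and> y * x = 1)"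

definition nc_switch :: "'a::ring_1 \<Rightarrow> 'a \<Rightarrow> 'a \<Rightarrow> 'a \<Rightarrow> bool" where
  "nc_switch A B C D \<longleftrightarrow>
     invertible_elem A \<and> invertible_elem (A - 1) \<and> invertible_elem B \<and> A * B \<noteq> B * A \<and>
     (let Ai = inverse_elem A; Bi = inverse_elem B in
        Ai * Bi * A * B - B * Ai * Bi * A = Bi * A * B - A \<and>
        C = Ai * Bi * A * (1 - A) \<and> D = 1 - Ai * Bi * A * B)"

end

theory Submission
  imports Defs
begin

(* Write U = A^-1 B^-1 A, so that C = U (1 - A) and D = 1 - U B. Then Q = (1 - A) U B = U B - B^-1 A B,
   and the fundamental equation says exactly that also Q = B U - A. From these two expressions Q
   commutes with B, the block N = [1 0; A B] satisfies N S = S' N, and the row (A, B A) is fixed by S.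
   In the columns i, i + 1, rows i and i + 1 of M form the block B^(i-1) N, every later row is
   B^(i-1) (A, B A) and every earlier row vanishes, while off these columns rows i and i + 1 of M
   agree. Hence M rho(S) = rho(S') M. Finally M = L X with L the lower triangular matrix of ones and
   X lower bidiagonal with the invertible diagonal entries B^(c-1); both factors have explicit
   inverses. *)

lemma sum_two_terms:
  fixes f :: "'b \<Rightarrow> 'a::comm_monoid_add"
  assumes "finite S" "a \<noteq> b" "\<And>k. k \<in> S \<Longrightarrow> k \<noteq> a \<Longrightarrow> k \<noteq> b \<Longrightarrow> f k = 0"
  shows "sum f S = (if a \<in> S then f a else 0) + (if b \<in> S then f b else 0)"
proof -
  have "sum f S = (\<Sum>k\<in>S. (if k = a then f k else 0) + (if k = b then f k else 0))"
    by (rule sum.cong) (use assms in auto)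
  then show ?thesis
    by (simp only: sum.distrib sum.delta assms(1))
qed

lemma sum_one_term:
  fixes f :: "'b \<Rightarrow> 'a::comm_monoid_add"
  assumes "finite S" "a \<in> S" "\<And>k. k \<in> S \<Longrightarrow> k \<noteq> a \<Longrightarrow> f k = 0"
  shows "sum f S = f a"
  using assms sum.mono_neutral_right[of S "{a}" f] by auto

lemma mat_mult_assoc:
  "mat_mult n (mat_mult n X Y) Z = mat_mult n X (mat_mult n Y Z)"
proof (intro ext)
  fix r c
  have "mat_mult n (mat_mult n X Y) Z r c = (\<Sum>k=1..n. \<Sum>j=1..n. X r j * Y j k * Z k c)"
    unfolding mat_mult_def by (simp add: sum_distrib_right)
  also have "\<dots> = (\<Sum>j=1..n. \<Sum>k=1..n. X r j * Y j k * Z k c)"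
    by (rule sum.swap)
  also have "\<dots> = mat_mult n X (mat_mult n Y Z) r c"
    unfolding mat_mult_def by (simp add: sum_distrib_left mult.assoc)
  finally show "mat_mult n (mat_mult n X Y) Z r c = mat_mult n X (mat_mult n Y Z) r c" .
qed

lemma mat_eq_refl: "mat_eq n X X"
  unfolding mat_eq_def by simp

lemma mat_eq_sym: "mat_eq n X Y \<Longrightarrow> mat_eq n Y X"
  unfolding mat_eq_def by simp

lemma mat_eq_trans [trans]: "mat_eq n X Y \<Longrightarrow> mat_eq n Y Z \<Longrightarrow> mat_eq n X Z"
  unfolding mat_eq_def by simp

lemma mat_mult_cong:
  "mat_eq n X X' \<Longrightarrow> mat_eq n Y Y' \<Longrightarrow> mat_eq n (mat_mult n X Y) (mat_mult n X' Y')"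
  unfolding mat_eq_def mat_mult_def by (auto intro!: sum.cong)

lemma mat_mult_id_left: "mat_eq n (mat_mult n mat_id X) X"
  unfolding mat_eq_def mat_mult_def mat_id_def by (simp add: of_bool_def[symmetric])

definition mat_inverse :: "nat \<Rightarrow> (nat \<Rightarrow> nat \<Rightarrow> 'a::ring_1) \<Rightarrow> (nat \<Rightarrow> nat \<Rightarrow> 'a) \<Rightarrow> bool" where
  "mat_inverse n X Y \<longleftrightarrow> mat_eq n (mat_mult n X Y) mat_id \<and> mat_eq n (mat_mult n Y X) mat_id"

lemma mat_mult_cancel_inverse:
  assumes "mat_eq n (mat_mult n X Y) mat_id"
  shows "mat_eq n (mat_mult n X (mat_mult n Y Z)) Z"
proof -
  have "mat_eq n (mat_mult n X (mat_mult n Y Z)) (mat_mult n mat_id Z)"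
    unfolding mat_mult_assoc[symmetric] by (rule mat_mult_cong[OF assms mat_eq_refl])
  also have "mat_eq n \<dots> Z" by (rule mat_mult_id_left)
  finally show ?thesis .
qed

lemma mat_inverse_mult:
  assumes "mat_inverse n X X'" "mat_inverse n Y Y'"
  shows "mat_inverse n (mat_mult n X Y) (mat_mult n Y' X')"
proof -
  have "mat_eq n (mat_mult n (mat_mult n X Y) (mat_mult n Y' X')) (mat_mult n X X')"
    unfolding mat_mult_assoc
    by (rule mat_mult_cong[OF mat_eq_refl mat_mult_cancel_inverse])
      (use assms in \<open>simp add: mat_inverse_def\<close>)
  moreover have "mat_eq n (mat_mult n (mat_mult n Y' X') (mat_mult n X Y)) (mat_mult n Y' Y)"
    unfolding mat_mult_assoc
    by (rule mat_mult_cong[OF mat_eq_refl mat_mult_cancel_inverse])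
      (use assms in \<open>simp add: mat_inverse_def\<close>)
  ultimately show ?thesis
    using assms unfolding mat_inverse_def by (blast intro: mat_eq_trans)
qed

lemma mat_conj_eq:
  assumes "mat_inverse n M M'" "mat_eq n (mat_mult n M X) (mat_mult n Y M)"
  shows "mat_eq n X (mat_mult n M' (mat_mult n Y M))"
proof -
  have "mat_eq n X (mat_mult n M' (mat_mult n M X))"
    by (rule mat_eq_sym, rule mat_mult_cancel_inverse) (use assms(1) in \<open>simp add: mat_inverse_def\<close>)
  also have "mat_eq n \<dots> (mat_mult n M' (mat_mult n Y M))"
    by (rule mat_mult_cong[OF mat_eq_refl assms(2)])
  finally show ?thesis .
qed

lemma mat_mult_rho:
  assumes "1 \<le> i" "i + 1 \<le> n" "1 \<le> c" "c \<le> n"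
  shows "mat_mult n X (rho S n i) r c =
    (if c = i \<or> c = i + 1 then X r i * S 1 (c + 1 - i) + X r (i + 1) * S 2 (c + 1 - i) else X r c)"
proof (cases "c = i \<or> c = i + 1")
  case True
  then have "mat_mult n X (rho S n i) r c = X r i * rho S n i i c + X r (i + 1) * rho S n i (i + 1) c"
    unfolding mat_mult_def using assms
    by (subst sum_two_terms[where a = i and b = "i + 1"]) (auto simp: rho_def mat_id_def)
  then show ?thesis
    using True by (auto simp: rho_def)
next
  case False
  then show ?thesis
    unfolding mat_mult_def using assms
    by (subst sum_one_term[where a = c]) (auto simp: rho_def mat_id_def)
qed

lemma rho_mat_mult:
  assumes "1 \<le> i" "i + 1 \<le> n" "1 \<le> r" "r \<le> n"
  shows "mat_mult n (rho S n i) X r c =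
    (if r = i \<or> r = i + 1 then S (r + 1 - i) 1 * X i c + S (r + 1 - i) 2 * X (i + 1) c else X r c)"
proof (cases "r = i \<or> r = i + 1")
  case True
  then have "mat_mult n (rho S n i) X r c = rho S n i r i * X i c + rho S n i r (i + 1) * X (i + 1) c"
    unfolding mat_mult_def using assms
    by (subst sum_two_terms[where a = i and b = "i + 1"]) (auto simp: rho_def mat_id_def)
  then show ?thesis
    using True by (auto simp: rho_def)
next
  case False
  then show ?thesis
    unfolding mat_mult_def using assms
    by (subst sum_one_term[where a = r]) (auto simp: rho_def mat_id_def)
qed

lemma invertible_elem_inverse:
  assumes "invertible_elem x"
  shows "x * inverse_elem x = 1" "inverse_elem x * x = 1"
proof -
  obtain y where y: "x * y = 1" "y * x = 1"
    using assms unfolding invertible_elem_def by blast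
  have "inverse_elem x = y"
    unfolding inverse_elem_def
  proof (rule the_equality)
    fix z assume "x * z = 1 \<and> z * x = 1"
    then have "y * (x * z) = y" "(y * x) * z = z" using y by simp_all
    then show "z = y" by (simp add: mult.assoc)
  qed (use y in simp)
  with y show "x * inverse_elem x = 1" "inverse_elem x * x = 1" by simp_all
qed

lemma nc_switch_identities:
  fixes A B C D Q :: "'a::ring_1"
  assumes sw: "nc_switch A B C D" and Q: "Q = (1 - A) * (1 - D)"
  shows "A * A + B * A * C = A" "A * B + B * A * D = B * A" "Q * B = B * Q"
    and "A * A + B * C = Q + (1 - Q) * A" "A * B + B * D = (1 - Q) * B"
proof -
  define Ai Bi where "Ai = inverse_elem A" and "Bi = inverse_elem B"
  define U where "U = Ai * Bi * A"
  have A_Ai: "A * (Ai * x) = x" for x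
    using sw invertible_elem_inverse(1)[of A] unfolding nc_switch_def Ai_def by (simp add: mult.assoc[symmetric])
  have B_Bi: "B * (Bi * x) = x" for x
    using sw invertible_elem_inverse(1)[of B] unfolding nc_switch_def Bi_def by (simp add: mult.assoc[symmetric])
  have fund: "U * B - B * U = Bi * A * B - A" and C: "C = U * (1 - A)" and D: "D = 1 - U * B"
    using sw unfolding nc_switch_def Let_def U_def Ai_def Bi_def by (simp_all add: mult.assoc)
  have BAU: "B * (A * (U * x)) = A * x" for x
    using A_Ai B_Bi unfolding U_def by (simp add: mult.assoc)
  have "Q = U * B - A * (Ai * (Bi * A * B))"
    unfolding Q D U_def by (simp add: algebra_simps)
  then have Q_right: "Q = U * B - Bi * A * B"
    using A_Ai by simp
  have "B * U = U * B - (U * B - B * U)"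
    by simp
  also have "\<dots> = Q + A"
    unfolding fund Q_right by simp
  finally have BU: "B * U = Q + A" .
  have "B * A * C = A * (1 - A)"
    using BAU[of "1 - A"] unfolding C by (simp add: mult.assoc)
  then show "A * A + B * A * C = A"
    by (simp add: algebra_simps)
  have "B * A * D = B * A - A * B"
    using BAU[of B] unfolding D by (simp add: algebra_simps)
  then show "A * B + B * A * D = B * A"
    by simp
  have "B * Q = B * U * B - A * B"
    using B_Bi unfolding Q_right by (simp add: algebra_simps)
  then show "Q * B = B * Q"
    unfolding BU by (simp add: algebra_simps)
  show "A * A + B * C = Q + (1 - Q) * A"
    unfolding C mult.assoc[symmetric] BU by (simp add: algebra_simps)
  show "A * B + B * D = (1 - Q) * B"
    unfolding D right_diff_distrib mult.assoc[symmetric] BU by (simp add: algebra_simps)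
qed

lemma nc_switch_block_identities:
  fixes A B C D Q P :: "'a::ring_1"
  assumes sw: "nc_switch A B C D" and Q: "Q = (1 - A) * (1 - D)" and QP: "Q * P = P * Q"
  shows "P * A * A + P * B * C = Q * P + (1 - Q) * (P * A)"
    and "P * A * B + P * B * D = (1 - Q) * (P * B)"
    and "P * A * A + P * B * A * C = P * A"
    and "P * A * B + P * B * A * D = P * B * A"
proof -
  note ids = nc_switch_identities[OF sw Q]
  have "P * A * A + P * B * C = P * (A * A + B * C)"
    by (simp add: algebra_simps)
  also have "\<dots> = P * Q + P * A - P * Q * A"
    unfolding ids(4) by (simp add: algebra_simps)
  also have "\<dots> = Q * P + (1 - Q) * (P * A)"
    unfolding QP[symmetric] by (simp add: algebra_simps)
  finally show "P * A * A + P * B * C = Q * P + (1 - Q) * (P * A)" .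
  have "P * A * B + P * B * D = P * (A * B + B * D)"
    by (simp add: algebra_simps)
  also have "\<dots> = P * B - P * Q * B"
    unfolding ids(5) by (simp add: algebra_simps)
  also have "\<dots> = (1 - Q) * (P * B)"
    unfolding QP[symmetric] by (simp add: algebra_simps)
  finally show "P * A * B + P * B * D = (1 - Q) * (P * B)" .
  show "P * A * A + P * B * A * C = P * A" "P * A * B + P * B * A * D = P * B * A"
    using arg_cong[where f = "\<lambda>x. P * x", OF ids(1)] arg_cong[where f = "\<lambda>x. P * x", OF ids(2)]
    by (simp_all add: algebra_simps)
qed

definition lower_ones :: "nat \<Rightarrow> nat \<Rightarrow> 'a::ring_1" where
  "lower_ones r c = (if c \<le> r then 1 else 0)"

definition lower_ones_inv :: "nat \<Rightarrow> nat \<Rightarrow> 'a::ring_1" where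
  "lower_ones_inv r c = (if r = c then 1 else if r = c + 1 then -1 else 0)"

lemma mat_inverse_lower_ones: "mat_inverse n lower_ones lower_ones_inv"
proof -
  have "mat_mult n lower_ones lower_ones_inv r c = mat_id r c"
    if "1 \<le> r" "r \<le> n" "1 \<le> c" "c \<le> n" for r c
    unfolding mat_mult_def using that
    by (subst sum_two_terms[where a = c and b = "c + 1"]) (auto simp: lower_ones_def lower_ones_inv_def mat_id_def)
  moreover have "mat_mult n lower_ones_inv lower_ones r c = mat_id r c"
    if "1 \<le> r" "r \<le> n" "1 \<le> c" "c \<le> n" for r c
    unfolding mat_mult_def using that
    by (subst sum_two_terms[where a = r and b = "r - 1"]) (auto simp: lower_ones_def lower_ones_inv_def mat_id_def)
  ultimately show ?thesis
    unfolding mat_inverse_def mat_eq_def by blast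
qed

definition bidiag :: "'a::ring_1 \<Rightarrow> 'a \<Rightarrow> nat \<Rightarrow> nat \<Rightarrow> 'a" where
  "bidiag B G r c = (if r = c then B ^ (c - 1) else if r = c + 1 then B ^ (c - 1) * G else 0)"

definition bidiag_inv :: "'a::ring_1 \<Rightarrow> 'a \<Rightarrow> nat \<Rightarrow> nat \<Rightarrow> 'a" where
  "bidiag_inv B' G r c = (if c \<le> r then (- (B' * G)) ^ (r - c) * B' ^ (c - 1) else 0)"

lemma bidiag_mult_bidiag_inv:
  fixes B B' G :: "'a::ring_1"
  assumes B: "B * B' = 1" "B' * B = 1" and r: "1 \<le> r" "r \<le> n" and c: "1 \<le> c"
  shows "mat_mult n (bidiag B G) (bidiag_inv B' G) r c = mat_id r c"
proof -
  define K where "K = - (B' * G)"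
  have BK: "B * K = - G"
    unfolding K_def using B by (simp add: mult.assoc[symmetric])
  have sum: "mat_mult n (bidiag B G) (bidiag_inv B' G) r c =
      bidiag B G r r * bidiag_inv B' G r c
    + (if r - 1 \<in> {1..n} then bidiag B G r (r - 1) * bidiag_inv B' G (r - 1) c else 0)"
    unfolding mat_mult_def using r
    by (subst sum_two_terms[where a = r and b = "r - 1"]) (auto simp: bidiag_def)
  show ?thesis
  proof (cases "c < r")
    case True
    define j m where "j = r - 2" and "m = r - c - 1"
    have r': "r = Suc (Suc j)" and m: "r - c = Suc m" "r - 1 - c = m"
      using True c unfolding j_def m_def by auto
    have "mat_mult n (bidiag B G) (bidiag_inv B' G) r c
        = B ^ Suc j * (K ^ Suc m * B' ^ (c - 1)) + B ^ j * G * (K ^ m * B' ^ (c - 1))"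
      unfolding sum using True r r' m by (simp add: bidiag_def bidiag_inv_def K_def)
    also have "\<dots> = B ^ j * (B * K + G) * K ^ m * B' ^ (c - 1)"
      by (simp add: algebra_simps power_Suc2[of B] power_Suc[of K] del: power_Suc)
    finally show ?thesis
      using True by (simp add: BK mat_id_def)
  next
    case False
    then show ?thesis
      unfolding sum using B by (auto simp: bidiag_def bidiag_inv_def mat_id_def left_right_inverse_power)
  qed
qed

lemma bidiag_inv_mult_bidiag:
  fixes B B' G :: "'a::ring_1"
  assumes B: "B * B' = 1" "B' * B = 1" and r: "r \<le> n" and c: "1 \<le> c" "c \<le> n"
  shows "mat_mult n (bidiag_inv B' G) (bidiag B G) r c = mat_id r c"
proof -
  define K where "K = - (B' * G)"
  have pow: "B' ^ j * B ^ j = 1" for j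
    using B(2) by (rule left_right_inverse_power)
  have sum: "mat_mult n (bidiag_inv B' G) (bidiag B G) r c =
      bidiag_inv B' G r c * bidiag B G c c
    + (if c + 1 \<in> {1..n} then bidiag_inv B' G r (c + 1) * bidiag B G (c + 1) c else 0)"
    unfolding mat_mult_def using c
    by (subst sum_two_terms[where a = c and b = "c + 1"]) (auto simp: bidiag_def)
  show ?thesis
  proof (cases "c < r")
    case True
    define j m where "j = c - 1" and "m = r - c - 1"
    have c': "c = Suc j" and m: "r - c = Suc m" "r - (c + 1) = m"
      using True c unfolding j_def m_def by auto
    have "mat_mult n (bidiag_inv B' G) (bidiag B G) r c
        = K ^ Suc m * B' ^ j * B ^ j + K ^ m * B' ^ Suc j * (B ^ j * G)"
      unfolding sum using True r c c' m by (auto simp: bidiag_def bidiag_inv_def K_def)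
    also have "\<dots> = K ^ m * (K * (B' ^ j * B ^ j) + B' * (B' ^ j * B ^ j) * G)"
      by (simp add: algebra_simps power_Suc2[of K] power_Suc[of B'] del: power_Suc)
    finally show ?thesis
      using True by (simp add: pow K_def mat_id_def)
  next
    case False
    then show ?thesis
      unfolding sum using pow by (auto simp: bidiag_def bidiag_inv_def mat_id_def)
  qed
qed

lemma mat_inverse_bidiag:
  fixes B B' G :: "'a::ring_1"
  assumes "B * B' = 1" "B' * B = 1"
  shows "mat_inverse n (bidiag B G) (bidiag_inv B' G)"
  using bidiag_mult_bidiag_inv[OF assms] bidiag_inv_mult_bidiag[OF assms]
  unfolding mat_inverse_def mat_eq_def by blast

lemma mat_inverse_cong:
  assumes "mat_eq n X X'" "mat_inverse n X Y"
  shows "mat_inverse n X' Y"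
proof -
  have "mat_eq n (mat_mult n X' Y) (mat_mult n X Y)" "mat_eq n (mat_mult n Y X') (mat_mult n Y X)"
    by (rule mat_mult_cong; use assms(1) mat_eq_sym mat_eq_refl in blast)+
  with assms(2) show ?thesis
    unfolding mat_inverse_def by (blast intro: mat_eq_trans)
qed

definition switch_conjugator :: "'a::ring_1 \<Rightarrow> 'a \<Rightarrow> nat \<Rightarrow> nat \<Rightarrow> 'a" where
  "switch_conjugator A B r c =
    (if r = 1 then (if c = 1 then 1 else 0)
     else if c < r then B ^ (c - 1) * A
     else if c = r then B ^ (r - 1) else 0)"

lemma switch_conjugator_entry:
  "1 \<le> r \<Longrightarrow> 1 \<le> c \<Longrightarrow>
    switch_conjugator A B r c = (if c < r then B ^ (c - 1) * A else if c = r then B ^ (r - 1) else 0)"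
  unfolding switch_conjugator_def by auto

lemma switch_conjugator_factor:
  "mat_eq n (mat_mult n lower_ones (bidiag B (A - 1))) (switch_conjugator A B)"
proof -
  have "mat_mult n lower_ones (bidiag B (A - 1)) r c = switch_conjugator A B r c"
    if "1 \<le> r" "r \<le> n" "1 \<le> c" "c \<le> n" for r c
  proof -
    have "mat_mult n lower_ones (bidiag B (A - 1)) r c
        = lower_ones r c * B ^ (c - 1)
          + (if c + 1 \<le> n then lower_ones r (c + 1) * (B ^ (c - 1) * (A - 1)) else 0)"
      unfolding mat_mult_def using that
      by (subst sum_two_terms[where a = c and b = "c + 1"]) (auto simp: bidiag_def)
    then show ?thesis
      using that by (auto simp: lower_ones_def switch_conjugator_entry algebra_simps)
  qed
  then show ?thesis
    unfolding mat_eq_def by blast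
qed

lemma mat_inverse_switch_conjugator:
  fixes A B B' :: "'a::ring_1"
  assumes "B * B' = 1" "B' * B = 1"
  shows "mat_inverse n (switch_conjugator A B) (mat_mult n (bidiag_inv B' (A - 1)) lower_ones_inv)"
  using mat_inverse_cong[OF switch_conjugator_factor
      mat_inverse_mult[OF mat_inverse_lower_ones mat_inverse_bidiag[OF assms]]] .

lemma switch_conjugator_intertwines:
  fixes A B C D Q :: "'a::ring_1"
  assumes sw: "nc_switch A B C D" and Q: "Q = (1 - A) * (1 - D)"
    and i: "1 \<le> i" "i + 1 \<le> n"
  shows "mat_eq n (mat_mult n (switch_conjugator A B) (rho (mat2 A B C D) n i))
                  (mat_mult n (rho (mat2 0 1 Q (1 - Q)) n i) (switch_conjugator A B))"
proof -
  let ?M = "switch_conjugator A B"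
  define P where "P = B ^ (i - 1)"
  have PB: "P * B = B ^ i"
    unfolding P_def by (rule power_minus_mult) (use i in simp)
  have QP: "Q * P = P * Q"
    unfolding P_def
    by (rule power_commuting_commutes[symmetric]) (rule nc_switch_identities(3)[OF sw Q, symmetric])
  note rows = nc_switch_block_identities[OF sw Q QP]
  have M_block: "?M i i = P" "?M i (i + 1) = 0" "?M (i + 1) i = P * A" "?M (i + 1) (i + 1) = P * B"
    using i by (simp_all add: switch_conjugator_entry P_def flip: PB)
  have M_before: "?M r i = 0" "?M r (i + 1) = 0" if "1 \<le> r" "r < i" for r
    using that by (simp_all add: switch_conjugator_entry)
  have M_after: "?M r i = P * A" "?M r (i + 1) = P * B * A" if "i + 1 < r" for r
    using that i by (simp_all add: switch_conjugator_entry P_def flip: PB)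
  have M_rows_agree: "?M i c = ?M (i + 1) c" if "1 \<le> c" "c \<noteq> i" "c \<noteq> i + 1" for c
    using that i by (simp add: switch_conjugator_entry)
  have "mat_mult n ?M (rho (mat2 A B C D) n i) r c = mat_mult n (rho (mat2 0 1 Q (1 - Q)) n i) ?M r c"
    if r: "1 \<le> r" "r \<le> n" and c: "1 \<le> c" "c \<le> n" for r c
  proof (cases "c = i \<or> c = i + 1")
    case True
    consider "r < i" | "r = i" | "r = i + 1" | "i + 1 < r"
      by linarith
    then show ?thesis
      unfolding mat_mult_rho[OF i c] rho_mat_mult[OF i r]
      \<comment> \<open>without \<open>One_nat_def\<close>, \<open>i + 1\<close> stays unrewritten to \<open>Suc i\<close>, so the entry facts still match\<close>
      using True by cases
        (auto simp del: One_nat_def simp add: mat2_def M_block M_before[OF r(1)] M_after rows)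
  next
    case False
    then show ?thesis
      unfolding mat_mult_rho[OF i c] rho_mat_mult[OF i r]
      using M_rows_agree[OF c(1)] by (auto simp: mat2_def algebra_simps)
  qed
  then show ?thesis
    unfolding mat_eq_def by blast
qed

theorem lemma2p2:
  fixes A B C D :: "'a::ring_1" and n :: nat
  assumes sw: "nc_switch A B C D"
    and n: "n \<ge> 2"
  defines "Q \<equiv> (1 - A) * (1 - D)"
    and "M \<equiv> (\<lambda>r c. if r = 1 then (if c = 1 then 1 else 0)
                    else if c < r then B ^ (c - 1) * A
                    else if c = r then B ^ (r - 1) else 0)"
  shows "\<exists>Minv. mat_eq n (mat_mult n Minv M) mat_id \<and> mat_eq n (mat_mult n M Minv) mat_id \<and>
           (\<forall>i. 1 \<le> i \<and> i \<le> n - 1 \<longrightarrow>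
              mat_eq n (rho (mat2 A B C D) n i)
                       (mat_mult n Minv (mat_mult n (rho (mat2 0 1 Q (1 - Q)) n i) M)))"
proof -
  have B_inv: "B * inverse_elem B = 1" "inverse_elem B * B = 1"
    using sw invertible_elem_inverse unfolding nc_switch_def by blast+
  define Minv where "Minv = mat_mult n (bidiag_inv (inverse_elem B) (A - 1)) lower_ones_inv"
  have M: "M = switch_conjugator A B"
    unfolding M_def by (intro ext) (simp add: switch_conjugator_def)
  have inv: "mat_inverse n M Minv"
    unfolding M Minv_def using B_inv by (rule mat_inverse_switch_conjugator)
  have "mat_eq n (rho (mat2 A B C D) n i) (mat_mult n Minv (mat_mult n (rho (mat2 0 1 Q (1 - Q)) n i) M))"
    if "1 \<le> i" "i \<le> n - 1" for i
  proof (rule mat_conj_eq[OF inv])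
    show "mat_eq n (mat_mult n M (rho (mat2 A B C D) n i)) (mat_mult n (rho (mat2 0 1 Q (1 - Q)) n i) M)"
      unfolding M using that n by (intro switch_conjugator_intertwines[OF sw meta_eq_to_obj_eq[OF Q_def]]) auto
  qed
  with inv show ?thesis
    unfolding mat_inverse_def by blast
qed

end
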